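(* Let $k\ge 1$ and $n$ be positive integers with $n>3k+\sqrt{2k^{2}-k}$. Then for every $k$-regular graph $G$ with $n$ vertices, the complement $\overline{G}$ is not Helly.
   Context: All graphs are finite and simple. A clique is a maximal set of pairwise adjacent vertices. A collection of sets is intersecting if any two members have nonempty intersection, and has the Helly property if every intersecting subcollection has nonempty total intersection. A graph is Helly if its collection of cliques has the Helly property. *)

theory Defs
  imports Complex_Main
begin

definition simple_graph :: "'a set \<Rightarrow> ('a \<Rightarrow> 'a \<Rightarrow> bool) \<Rightarrow> bool" where
  "simple_graph V E \<longleftrightarrow> finite V \<and> (\<forall>x y. E x y \<longrightarrow> x \<in> V \<and> y \<in> V) \<and>
     (\<forall>x y. E x y \<longrightarrow> E y x) \<and> (\<forall>x. \<not> E x x)"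

definition degree :: "'a set \<Rightarrow> ('a \<Rightarrow> 'a \<Rightarrow> bool) \<Rightarrow> 'a \<Rightarrow> nat" where
  "degree V E v = card {u \<in> V. E v u}"

definition regular :: "'a set \<Rightarrow> ('a \<Rightarrow> 'a \<Rightarrow> bool) \<Rightarrow> nat \<Rightarrow> bool" where
  "regular V E k \<longleftrightarrow> (\<forall>v \<in> V. degree V E v = k)"

definition complement :: "'a set \<Rightarrow> ('a \<Rightarrow> 'a \<Rightarrow> bool) \<Rightarrow> ('a \<Rightarrow> 'a \<Rightarrow> bool)" where
  "complement V E = (\<lambda>x y. x \<in> V \<and> y \<in> V \<and> x \<noteq> y \<and> \<not> E x y)"

definition complete_set :: "'a set \<Rightarrow> ('a \<Rightarrow> 'a \<Rightarrow> bool) \<Rightarrow> 'a set \<Rightarrow> bool" where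
  "complete_set V E C \<longleftrightarrow> C \<subseteq> V \<and> (\<forall>x\<in>C. \<forall>y\<in>C. x \<noteq> y \<longrightarrow> E x y)"

definition is_clique :: "'a set \<Rightarrow> ('a \<Rightarrow> 'a \<Rightarrow> bool) \<Rightarrow> 'a set \<Rightarrow> bool" where
  "is_clique V E C \<longleftrightarrow> complete_set V E C \<and>
     (\<forall>D. complete_set V E D \<and> C \<subseteq> D \<longrightarrow> D = C)"

definition cliques :: "'a set \<Rightarrow> ('a \<Rightarrow> 'a \<Rightarrow> bool) \<Rightarrow> 'a set set" where
  "cliques V E = {C. is_clique V E C}"

definition intersecting :: "'a set set \<Rightarrow> bool" where
  "intersecting \<F> \<longleftrightarrow> (\<forall>A\<in>\<F>. \<forall>B\<in>\<F>. A \<inter> B \<noteq> {})"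

definition helly_property :: "'a set set \<Rightarrow> bool" where
  "helly_property \<F> \<longleftrightarrow> (\<forall>\<G> \<subseteq> \<F>. intersecting \<G> \<longrightarrow> \<Inter>\<G> \<noteq> {})"

definition helly_graph :: "'a set \<Rightarrow> ('a \<Rightarrow> 'a \<Rightarrow> bool) \<Rightarrow> bool" where
  "helly_graph V E \<longleftrightarrow> helly_property (cliques V E)"

end

theory Submission
  imports Defs
begin

text \<open>Take an independent triple T = {a, b, c} of G, i.e. a triangle of the complement. The cliques
  of the complement containing two vertices of T pairwise intersect, and a vertex u lying in all of
  them can only have G-neighbours adjacent to at least two vertices of T: a neighbour x missing
  y, z \<in> T would lie with y and z in a clique of the complement, which then contains u. So the
  complement is not Helly once fewer than k vertices are adjacent to two vertices of T.
  Such a triple is found by averaging twice: a non-neighbour b of a with few common neighbours,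
  then a vertex c outside N[a] \<union> N[b] with few neighbours in N(a) \<union> N(b). The bound
  n > 3k + sqrt(2k^2 - k) is what makes these two counts add up to less than k.\<close>

definition neighbours :: "'a set \<Rightarrow> ('a \<Rightarrow> 'a \<Rightarrow> bool) \<Rightarrow> 'a \<Rightarrow> 'a set" where
  "neighbours V E v = {u \<in> V. E v u}"

lemma card_neighbours:
  assumes "regular V E k" and "v \<in> V"
  shows "card (neighbours V E v) = k"
  using assms by (simp add: regular_def degree_def neighbours_def)

lemma finite_neighbours [simp]: "finite V \<Longrightarrow> finite (neighbours V E v)"
  by (simp add: neighbours_def)

lemma mem_neighbours_sym:
  assumes "simple_graph V E"
  shows "x \<in> neighbours V E y \<longleftrightarrow> y \<in> neighbours V E x"
  using assms by (auto simp: neighbours_def simple_graph_def)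

lemma complete_set_extends_to_clique:
  assumes "finite V" and "complete_set V H D"
  obtains C where "is_clique V H C" and "D \<subseteq> C"
proof -
  let ?F = "{C. complete_set V H C \<and> D \<subseteq> C}"
  have "?F \<subseteq> Pow V" by (auto simp: complete_set_def)
  then have "finite ?F" using assms(1) by (meson finite_Pow_iff rev_finite_subset)
  moreover have "D \<in> ?F" using assms(2) by auto
  ultimately obtain C where "C \<in> ?F" and "\<forall>C'\<in>?F. C \<subseteq> C' \<longrightarrow> C = C'"
    using finite_has_maximal[of ?F] by blast
  then show thesis using that unfolding is_clique_def by (metis (lifting) mem_Collect_eq order.trans)
qed

lemma intersect_if_card_inter_sum_gt:
  assumes "finite T" and "card T < card (C \<inter> T) + card (D \<inter> T)"
  shows "C \<inter> D \<noteq> {}"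
proof
  assume "C \<inter> D = {}"
  then have "card (C \<inter> T) + card (D \<inter> T) = card ((C \<inter> T) \<union> (D \<inter> T))"
    using assms(1) by (intro card_Un_disjoint[symmetric]) auto
  also have "\<dots> \<le> card T" using assms(1) by (intro card_mono) auto
  finally show False using assms(2) by simp
qed

text \<open>Otherwise {x, y, z} spans a clique of the complement containing u and its neighbour x.\<close>
lemma neighbour_of_common_clique_vertex:
  assumes G: "simple_graph V E" and "y \<in> V" "z \<in> V" "y \<noteq> z" "\<not> E y z"
    and u: "\<And>C. C \<in> cliques V (complement V E) \<Longrightarrow> y \<in> C \<Longrightarrow> z \<in> C \<Longrightarrow> u \<in> C"
    and "E u x"
  shows "E x y \<or> E x z"
proof (rule ccontr)
  assume "\<not> (E x y \<or> E x z)"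
  with assms have "complete_set V (complement V E) {x, y, z}"
    unfolding complete_set_def complement_def simple_graph_def by blast
  then obtain C where C: "is_clique V (complement V E) C" and "{x, y, z} \<subseteq> C"
    using G complete_set_extends_to_clique unfolding simple_graph_def by metis
  with u have "u \<in> C" "x \<in> C" by (auto simp: cliques_def)
  moreover have "u \<noteq> x" using \<open>E u x\<close> G by (auto simp: simple_graph_def)
  ultimately have "complement V E u x" using C by (auto simp: is_clique_def complete_set_def)
  with \<open>E u x\<close> show False by (simp add: complement_def)
qed

lemma two_nonneighbours_in_triple:
  assumes "card T = 3" and "card (neighbours V E x \<inter> T) < 2"
  obtains y z where "y \<in> T" "z \<in> T" "y \<noteq> z" "y \<notin> neighbours V E x" "z \<notin> neighbours V E x"
proof -
  have "finite T" using assms(1) by (simp add: card_ge_0_finite)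
  then have "card (T - neighbours V E x) = card T - card (T \<inter> neighbours V E x)"
    by (simp add: card_Diff_subset_Int)
  then have "Suc (Suc 0) \<le> card (T - neighbours V E x)"
    using assms by (simp add: Int_commute)
  then show thesis using that by (auto simp: card_le_Suc_iff)
qed

lemma not_helly_complement_if_few_double_neighbours:
  assumes G: "simple_graph V E" and "regular V E k"
    and T: "T \<subseteq> V" "card T = 3" and indep: "\<forall>y\<in>T. \<forall>z\<in>T. \<not> E y z"
    and few: "card {x \<in> V. 2 \<le> card (neighbours V E x \<inter> T)} < k"
  shows "\<not> helly_graph V (complement V E)"
proof
  let ?H = "complement V E"
  let ?\<G> = "{C \<in> cliques V ?H. 2 \<le> card (C \<inter> T)}"
  have fin: "finite V" using G by (simp add: simple_graph_def)
  have "finite T" using T(2) by (simp add: card_ge_0_finite)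
  assume "helly_graph V ?H"
  moreover have "intersecting ?\<G>"
    unfolding intersecting_def
  proof (intro ballI)
    fix C D assume "C \<in> ?\<G>" "D \<in> ?\<G>"
    then show "C \<inter> D \<noteq> {}"
      using T(2) \<open>finite T\<close> by (intro intersect_if_card_inter_sum_gt[of T]) auto
  qed
  moreover have "?\<G> \<subseteq> cliques V ?H" by blast
  ultimately have "\<Inter>?\<G> \<noteq> {}"
    unfolding helly_graph_def helly_property_def by blast
  then obtain u where u: "u \<in> \<Inter>?\<G>" by blast
  have "complete_set V ?H T"
    using T indep unfolding complete_set_def complement_def by auto
  then obtain C0 where C0: "is_clique V ?H C0" "T \<subseteq> C0"
    using fin complete_set_extends_to_clique by metis
  then have "C0 \<in> ?\<G>" using T(2) by (simp add: cliques_def Int_absorb1)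
  then have "u \<in> V" using u C0(1) by (auto simp: is_clique_def complete_set_def)
  have through_pair: "u \<in> C" if "C \<in> cliques V ?H" "y \<in> T" "z \<in> T" "y \<noteq> z" "y \<in> C" "z \<in> C"
    for C y z
  proof -
    have "{y, z} \<subseteq> C \<inter> T" using that by auto
    then have "card {y, z} \<le> card (C \<inter> T)" using \<open>finite T\<close> by (intro card_mono) auto
    then have "C \<in> ?\<G>" using that by simp
    then show ?thesis using u by blast
  qed
  have "neighbours V E u \<subseteq> {x \<in> V. 2 \<le> card (neighbours V E x \<inter> T)}"
  proof (rule subsetI, rule ccontr)
    fix x assume x: "x \<in> neighbours V E u" and "x \<notin> {x \<in> V. 2 \<le> card (neighbours V E x \<inter> T)}"
    then have "card (neighbours V E x \<inter> T) < 2" by (simp add: neighbours_def)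
    then obtain y z where yz: "y \<in> T" "z \<in> T" "y \<noteq> z"
        "y \<notin> neighbours V E x" "z \<notin> neighbours V E x"
      using two_nonneighbours_in_triple[OF T(2)] by blast
    have "y \<in> V" "z \<in> V" "\<not> E y z" using yz T indep by auto
    moreover have "E u x" using x by (simp add: neighbours_def)
    moreover have "\<And>C. C \<in> cliques V ?H \<Longrightarrow> y \<in> C \<Longrightarrow> z \<in> C \<Longrightarrow> u \<in> C"
      using through_pair yz(1-3) by blast
    ultimately have "E x y \<or> E x z"
      using neighbour_of_common_clique_vertex[OF G _ _ \<open>y \<noteq> z\<close>] by blast
    then show False using yz T by (auto simp: neighbours_def)
  qed
  then have "card (neighbours V E u) \<le> card {x \<in> V. 2 \<le> card (neighbours V E x \<inter> T)}"
    using fin by (intro card_mono) auto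
  then show False
    using few card_neighbours[OF \<open>regular V E k\<close> \<open>u \<in> V\<close>] by simp
qed

lemma sum_card_filter_swap:
  assumes "finite X" and "finite Y"
  shows "(\<Sum>y\<in>Y. card {x \<in> X. R x y}) = (\<Sum>x\<in>X. card {y \<in> Y. R x y})"
proof -
  have "(\<Sum>y\<in>Y. card {x \<in> X. R x y}) = (\<Sum>y\<in>Y. \<Sum>x\<in>X. if R x y then 1 else 0)"
    using assms by (simp add: sum.inter_filter[symmetric])
  also have "\<dots> = (\<Sum>x\<in>X. \<Sum>y\<in>Y. if R x y then 1 else 0)" by (rule sum.swap)
  also have "\<dots> = (\<Sum>x\<in>X. card {y \<in> Y. R x y})"
    using assms by (simp add: sum.inter_filter[symmetric])
  finally show ?thesis .
qed

lemma sum_card_neighbours_Int_swap: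
  assumes G: "simple_graph V E" and "X \<subseteq> V" and "Y \<subseteq> V"
  shows "(\<Sum>y\<in>Y. card (neighbours V E y \<inter> X)) = (\<Sum>x\<in>X. card (neighbours V E x \<inter> Y))"
proof -
  have fin: "finite X" "finite Y" using G assms(2,3) finite_subset by (auto simp: simple_graph_def)
  have "\<And>y. neighbours V E y \<inter> X = {x \<in> X. E x y}" "\<And>x. neighbours V E x \<inter> Y = {y \<in> Y. E x y}"
    using G assms(2,3) by (auto simp: neighbours_def simple_graph_def)
  then show ?thesis using sum_card_filter_swap[OF fin] by simp
qed

lemma exists_le_average:
  fixes f :: "'b \<Rightarrow> nat"
  assumes "finite W" and "W \<noteq> {}" and "(\<Sum>c\<in>W. f c) \<le> M"
  obtains c where "c \<in> W" and "f c * card W \<le> M"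
proof -
  have "\<exists>c\<in>W. f c * card W \<le> M"
  proof (rule ccontr)
    assume "\<not> ?thesis"
    then have "(\<Sum>c\<in>W. M) < (\<Sum>c\<in>W. f c * card W)"
      using assms(1,2) by (intro sum_strict_mono) auto
    also have "\<dots> = (\<Sum>c\<in>W. f c) * card W" by (simp add: sum_distrib_right)
    also have "\<dots> \<le> M * card W" using assms(3) by simp
    finally show False by (simp add: mult.commute)
  qed
  then show thesis using that by blast
qed

text \<open>Double counting the paths a - x - b with b not adjacent to a: each of the k neighbours x
  of a has at most k - 1 further neighbours.\<close>
lemma exists_nonneighbour_few_common_neighbours:
  assumes G: "simple_graph V E" and reg: "regular V E k" and a: "a \<in> V" and n: "k + 1 < card V"
  obtains b where "b \<in> V" "b \<noteq> a" "\<not> E a b"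
    "card (neighbours V E a \<inter> neighbours V E b) * (card V - k - 1) \<le> k * (k - 1)"
proof -
  let ?N = "neighbours V E"
  define Z where "Z = V - insert a (?N a)"
  have fin: "finite V" using G by (simp add: simple_graph_def)
  have "a \<notin> ?N a" using G by (simp add: neighbours_def simple_graph_def)
  then have "card (insert a (?N a)) = k + 1" using card_neighbours[OF reg a] fin by simp
  moreover have "insert a (?N a) \<subseteq> V" using a by (auto simp: neighbours_def)
  ultimately have cZ: "card Z = card V - k - 1"
    unfolding Z_def using fin by (simp add: card_Diff_subset)
  have "(\<Sum>b\<in>Z. card (?N b \<inter> ?N a)) = (\<Sum>x\<in>?N a. card (?N x \<inter> Z))"
    using G by (intro sum_card_neighbours_Int_swap) (auto simp: Z_def neighbours_def)
  also have "\<dots> \<le> (\<Sum>x\<in>?N a. k - 1)"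
  proof (rule sum_mono)
    fix x assume x: "x \<in> ?N a"
    then have "x \<in> V" "a \<in> ?N x" using mem_neighbours_sym[OF G] by (auto simp: neighbours_def)
    have "card (?N x \<inter> Z) \<le> card (?N x - {a})"
      using fin by (intro card_mono) (auto simp: Z_def)
    also have "\<dots> = k - 1"
      using card_neighbours[OF reg \<open>x \<in> V\<close>] \<open>a \<in> ?N x\<close> by simp
    finally show "card (?N x \<inter> Z) \<le> k - 1" .
  qed
  also have "\<dots> = k * (k - 1)" using card_neighbours[OF reg a] by simp
  finally have sum: "(\<Sum>b\<in>Z. card (?N b \<inter> ?N a)) \<le> k * (k - 1)" .
  have "Z \<noteq> {}" using cZ n by auto
  then obtain b where "b \<in> Z" "card (?N b \<inter> ?N a) * card Z \<le> k * (k - 1)"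
    using exists_le_average[OF _ _ sum] fin Z_def by blast
  moreover from \<open>b \<in> Z\<close> have "b \<in> V" "b \<noteq> a" "\<not> E a b" by (auto simp: Z_def neighbours_def)
  ultimately show thesis using that cZ by (simp add: Int_commute)
qed

text \<open>Double counting the edges between N(a) \<union> N(b) and the vertices W outside it
  and other than a, b: each vertex of N(a) \<union> N(b) spends a total of 2k edges on a and b.\<close>
lemma exists_nonneighbour_few_neighbours_in_union:
  assumes G: "simple_graph V E" and reg: "regular V E k"
    and ab: "a \<in> V" "b \<in> V" "a \<noteq> b" "\<not> E a b"
    and n: "card (neighbours V E a \<union> neighbours V E b) + 2 < card V"
  obtains c where "c \<in> V" "c \<noteq> a" "c \<noteq> b" "\<not> E a c" "\<not> E b c"
    "card (neighbours V E c \<inter> (neighbours V E a \<union> neighbours V E b))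
       * (card V - card (neighbours V E a \<union> neighbours V E b) - 2) + 2 * k
     \<le> k * card (neighbours V E a \<union> neighbours V E b)"
proof -
  let ?N = "neighbours V E"
  define U where "U = ?N a \<union> ?N b"
  define W where "W = V - U - {a, b}"
  have fin: "finite V" using G by (simp add: simple_graph_def)
  have UV: "U \<subseteq> V" unfolding U_def neighbours_def by auto
  have "a \<notin> U" "b \<notin> U" using G ab by (auto simp: U_def neighbours_def simple_graph_def)
  then have "{a, b} \<subseteq> V - U" using ab by auto
  moreover have "card (V - U) = card V - card U"
    using fin UV by (simp add: card_Diff_subset finite_subset)
  ultimately have cW: "card W = card V - card U - 2"
    using fin ab(3) by (simp add: W_def card_Diff_subset)
  have finW: "finite W" using fin by (simp add: W_def)
  have split: "card (?N x \<inter> W) + card (?N x \<inter> {a, b}) \<le> k" if "x \<in> U" for x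
  proof -
    have "card (?N x \<inter> W) + card (?N x \<inter> {a, b}) = card (?N x \<inter> W \<union> ?N x \<inter> {a, b})"
      using finW by (intro card_Un_disjoint[symmetric]) (auto simp: W_def)
    also have "\<dots> \<le> card (?N x)"
      using fin by (intro card_mono) auto
    finally show ?thesis using card_neighbours[OF reg] UV that by auto
  qed
  have "(\<Sum>x\<in>U. card (?N x \<inter> {a, b})) = (\<Sum>y\<in>{a, b}. card (?N y \<inter> U))"
    using G UV ab by (intro sum_card_neighbours_Int_swap[symmetric]) auto
  also have "\<dots> = 2 * k" using card_neighbours[OF reg] ab by (simp add: U_def Int_absorb2)
  finally have edges_to_ab: "(\<Sum>x\<in>U. card (?N x \<inter> {a, b})) = 2 * k" .
  have "(\<Sum>c\<in>W. card (?N c \<inter> U)) = (\<Sum>x\<in>U. card (?N x \<inter> W))"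
    using G UV by (intro sum_card_neighbours_Int_swap) (auto simp: W_def)
  also have "\<dots> \<le> (\<Sum>x\<in>U. k - card (?N x \<inter> {a, b}))"
    using split by (intro sum_mono) (meson le_diff_conv2 le_add2 order_trans)
  also have "\<dots> = (\<Sum>x\<in>U. k) - (\<Sum>x\<in>U. card (?N x \<inter> {a, b}))"
    using split by (intro sum_subtractf_nat) (meson le_add2 order_trans)
  also have "\<dots> = k * card U - 2 * k" using edges_to_ab by (simp add: mult.commute)
  finally have sum: "(\<Sum>c\<in>W. card (?N c \<inter> U)) \<le> k * card U - 2 * k" .
  have "2 * k \<le> k * card U"
    using split edges_to_ab sum_mono[of U "\<lambda>x. card (?N x \<inter> {a, b})" "\<lambda>_. k"] by fastforce
  have "W \<noteq> {}" using cW n U_def by auto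
  then obtain c where c: "c \<in> W" "card (?N c \<inter> U) * card W \<le> k * card U - 2 * k"
    using exists_le_average[OF finW _ sum] by blast
  then have "card (?N c \<inter> U) * card W + 2 * k \<le> k * card U"
    using \<open>2 * k \<le> k * card U\<close> by linarith
  moreover from \<open>c \<in> W\<close> have "c \<in> V" "c \<noteq> a" "c \<noteq> b" "\<not> E a c" "\<not> E b c"
    by (auto simp: W_def U_def neighbours_def)
  ultimately show thesis using that cW unfolding U_def by metis
qed

lemma card_double_neighbours_le:
  assumes G: "simple_graph V E"
  shows "card {x \<in> V. 2 \<le> card (neighbours V E x \<inter> {a, b, c})}
    \<le> card (neighbours V E a \<inter> neighbours V E b)
      + card (neighbours V E c \<inter> (neighbours V E a \<union> neighbours V E b))"
proof -
  let ?N = "neighbours V E"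
  have fin: "finite V" using G by (simp add: simple_graph_def)
  have "{x \<in> V. 2 \<le> card (?N x \<inter> {a, b, c})} \<subseteq> (?N a \<inter> ?N b) \<union> (?N c \<inter> (?N a \<union> ?N b))"
  proof (rule subsetI, rule ccontr)
    fix x assume x: "x \<in> {x \<in> V. 2 \<le> card (?N x \<inter> {a, b, c})}"
      and "x \<notin> (?N a \<inter> ?N b) \<union> (?N c \<inter> (?N a \<union> ?N b))"
    then obtain t where "?N x \<inter> {a, b, c} \<subseteq> {t}"
      using mem_neighbours_sym[OF G] by blast
    then have "card (?N x \<inter> {a, b, c}) \<le> card {t}" by (intro card_mono) auto
    then show False using x by simp
  qed
  then have "card {x \<in> V. 2 \<le> card (?N x \<inter> {a, b, c})} \<le> card ((?N a \<inter> ?N b) \<union> (?N c \<inter> (?N a \<union> ?N b)))"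
    using fin by (intro card_mono) auto
  also have "\<dots> \<le> card (?N a \<inter> ?N b) + card (?N c \<inter> (?N a \<union> ?N b))" by (rule card_Un_le)
  finally show ?thesis .
qed

lemma gap_above_three_k:
  fixes k n :: real
  assumes k: "1 \<le> k" and n: "3 * k + sqrt (2 * k\<^sup>2 - k) < n"
  shows "4 * k < n" and "2 * k\<^sup>2 - k < (n - 3 * k)\<^sup>2"
proof -
  have nonneg: "0 \<le> 2 * k\<^sup>2 - k" using k by (simp add: power2_eq_square)
  have "k \<le> sqrt (2 * k\<^sup>2 - k)"
    using k by (intro real_le_rsqrt) (simp add: power2_eq_square)
  then show "4 * k < n" using n by simp
  have "sqrt (2 * k\<^sup>2 - k) < n - 3 * k" using n by simp
  then have "(sqrt (2 * k\<^sup>2 - k))\<^sup>2 < (n - 3 * k)\<^sup>2"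
    by (intro power_strict_mono) (use nonneg in auto)
  then show "2 * k\<^sup>2 - k < (n - 3 * k)\<^sup>2" using nonneg by simp
qed

text \<open>With m = n - 4k, this bounds the number p of common neighbours from the first choice.
  Clearing the denominator m + 3k - 1 reduces it to k(k - 1) < m(m + 2k), the hypothesis on n.\<close>
lemma common_neighbours_quadratic_bound:
  fixes k m p :: real
  assumes k: "1 \<le> k" and m: "0 < m" and p: "0 \<le> p"
    and p_bound: "p * (m + 3 * k - 1) \<le> k * (k - 1)" and gap: "2 * k\<^sup>2 - k < (m + k)\<^sup>2"
  shows "p * (m + p) < k * m"
proof (cases "k = 1")
  case True
  then have "p * (m + 2) \<le> 0" using p_bound by (simp add: add.commute)
  then have "p = 0" using p m by (smt (verit) mult_pos_pos)
  then show ?thesis using True m by simp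
next
  case False
  then have k1: "1 < k" using k by simp
  define D where "D = m + 3 * k - 1"
  have D: "0 < D" using m k by (simp add: D_def)
  have pD: "p * D \<le> k * (k - 1)" using p_bound D_def by simp
  have "(p * D) * (m * D + p * D) \<le> (k * (k - 1)) * (m * D + k * (k - 1))"
    by (rule mult_mono) (use pD p D m k in auto)
  also have "\<dots> < (k * (k - 1)) * (m * D + m\<^sup>2 + 2 * m * k)"
    using gap k1 by (intro mult_strict_left_mono) (auto simp: power2_eq_square algebra_simps)
  also have "\<dots> = k * m * ((k - 1) * (D + m + 2 * k))" by (simp add: algebra_simps power2_eq_square)
  also have "\<dots> \<le> k * m * (D * D)"
    using k m unfolding D_def by (intro mult_left_mono) (auto simp: algebra_simps power2_eq_square)
  finally have "(p * (m + p)) * (D * D) < (k * m) * (D * D)" by (simp add: algebra_simps)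
  then show ?thesis using D by (smt (verit) mult_right_mono zero_less_mult_iff)
qed

lemma double_neighbours_bound:
  fixes n k p q :: real
  assumes k: "1 \<le> k" and p: "0 \<le> p" and q: "0 \<le> q"
    and n: "4 * k < n" and gap: "2 * k\<^sup>2 - k < (n - 3 * k)\<^sup>2"
    and p_bound: "p * (n - k - 1) \<le> k * (k - 1)"
    and q_bound: "q * (n - 2 * k + p - 2) + 2 * k \<le> k * (2 * k - p)"
  shows "p + q < k"
proof (rule ccontr)
  assume "\<not> p + q < k"
  then have q_ge: "k - p \<le> q" by simp
  define m where "m = n - 4 * k"
  have m: "0 < m" using n m_def by simp
  have key: "p * (m + p) < k * m"
    by (rule common_neighbours_quadratic_bound[OF k m p])
      (use p_bound gap in \<open>auto simp: m_def algebra_simps\<close>)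
  have "(k - p) * (n - 2 * k + p - 2) \<le> q * (n - 2 * k + p - 2)"
    using q_ge n k p by (intro mult_right_mono) auto
  then have "(k - p) * (m + 2 * k + p - 2) + 2 * k \<le> k * (2 * k - p)"
    using q_bound unfolding m_def by simp
  then have "k * m \<le> p * (m + p) - 2 * p" by (simp add: algebra_simps)
  then show False using key p by simp
qed

lemma double_neighbours_bound_nat:
  fixes n k p q U :: nat
  assumes k: "1 \<le> k" and n: "4 * k < n" and gap: "2 * (real k)\<^sup>2 - real k < (real n - 3 * real k)\<^sup>2"
    and U: "U + p = 2 * k"
    and p_bound: "p * (n - k - 1) \<le> k * (k - 1)" and q_bound: "q * (n - U - 2) + 2 * k \<le> k * U"
  shows "p + q < k"
proof -
  have "real (n - k - 1) = real n - real k - 1" "real (k - 1) = real k - 1" using k n by auto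
  then have "real p * (real n - real k - 1) \<le> real k * (real k - 1)"
    using p_bound by (metis of_nat_le_iff of_nat_mult)
  moreover have "real q * (real n - 2 * real k + real p - 2) + 2 * real k \<le> real k * (2 * real k - real p)"
  proof -
    have "U + 2 \<le> n" using U n k by linarith
    then have "real (n - U - 2) = real n - 2 * real k + real p - 2"
      using U by (simp flip: of_nat_add)
    moreover have "real U = 2 * real k - real p" using U by linarith
    ultimately show ?thesis using q_bound by (metis of_nat_add of_nat_le_iff of_nat_mult of_nat_numeral)
  qed
  ultimately have "real p + real q < real k"
    using k n gap by (intro double_neighbours_bound) auto
  then show ?thesis by linarith
qed

theorem mainTheorem6:
  fixes V :: "'a set" and E :: "'a \<Rightarrow> 'a \<Rightarrow> bool" and k n :: nat
  assumes "k \<ge> 1" and "n \<ge> 1"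
    and "real n > 3 * real k + sqrt (2 * (real k)\<^sup>2 - real k)"
    and "simple_graph V E" and "card V = n" and "regular V E k"
  shows "\<not> helly_graph V (complement V E)"
proof -
  let ?N = "neighbours V E"
  note G = \<open>simple_graph V E\<close> and reg = \<open>regular V E k\<close>
  have fin: "finite V" using G by (simp add: simple_graph_def)
  have "4 * real k < real n" and gap: "2 * (real k)\<^sup>2 - real k < (real n - 3 * real k)\<^sup>2"
    using gap_above_three_k assms(1,3) by auto
  then have n: "4 * k < n" by linarith
  obtain a where a: "a \<in> V" using assms(2,5) by fastforce
  obtain b where b: "b \<in> V" "b \<noteq> a" "\<not> E a b"
    and p_bound: "card (?N a \<inter> ?N b) * (n - k - 1) \<le> k * (k - 1)"
    using exists_nonneighbour_few_common_neighbours[OF G reg a] n assms(1,5) by auto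
  have U: "card (?N a \<union> ?N b) + card (?N a \<inter> ?N b) = 2 * k"
    using card_Un_Int[of "?N a" "?N b"] fin card_neighbours[OF reg] a b by simp
  obtain c where c: "c \<in> V" "c \<noteq> a" "c \<noteq> b" "\<not> E a c" "\<not> E b c"
    and q_bound: "card (?N c \<inter> (?N a \<union> ?N b)) * (n - card (?N a \<union> ?N b) - 2) + 2 * k
      \<le> k * card (?N a \<union> ?N b)"
    using exists_nonneighbour_few_neighbours_in_union[OF G reg a b(1) b(2)[symmetric]] b(3) U n assms(1,5)
    by auto
  have "card (?N a \<inter> ?N b) + card (?N c \<inter> (?N a \<union> ?N b)) < k"
    using double_neighbours_bound_nat[OF assms(1) n gap U p_bound q_bound] .
  then have "card {x \<in> V. 2 \<le> card (?N x \<inter> {a, b, c})} < k"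
    using card_double_neighbours_le[OF G] le_less_trans by blast
  moreover have "\<forall>y\<in>{a, b, c}. \<forall>z\<in>{a, b, c}. \<not> E y z"
    using G b c by (auto simp: simple_graph_def)
  moreover have "{a, b, c} \<subseteq> V" "card {a, b, c} = 3" using a b c by auto
  ultimately show ?thesis using not_helly_complement_if_few_double_neighbours[OF G reg] by blast
qed

end
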